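(* Let $D\ge1$, let $Q_D$ be the $D$-dimensional hypercube on $X=\{0,1\}^D$ with adjacency matrix $A$. For $1\le i<j\le D$ put $B_{ij}=\alpha^*_iA\alpha^*_j-\alpha^*_jA\alpha^*_i$, and let $1\le \ell\le D$. (i) If $\ell=i$ or $\ell=j$, then $B_{ij}\alpha_\ell=-\alpha_\ell B_{ij}$. (ii) If $\ell\ne i$ and $\ell\ne j$, then $B_{ij}\alpha_\ell=\alpha_\ell B_{ij}$.
   Context: $Q_D$ is the graph with vertex set $X=\{0,1\}^D$, two vertices adjacent iff they differ in exactly one coordinate. Matrices are real with rows and columns indexed by $X$. For $1\le i\le D$, $\alpha_i$ has $(x,y)$-entry $1$ if $x,y$ differ in the $i$-th coordinate and agree in all others, and $0$ otherwise; $\alpha^*_i$ is the diagonal matrix with $(x,x)$-entry $1$ if $x_i=0$ and $-1$ if $x_i=1$. *)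

theory Defs
  imports Complex_Main
begin

(* Vertices of Q_D: bool lists of length D; coordinate i (1 <= i <= D) of x is x ! (i - 1),
   with False = 0 and True = 1.  Matrices indexed by X are functions X => X => real;
   only their entries on X x X are meaningful. *)

definition cube :: "nat \<Rightarrow> bool list set" where
  "cube D = {x. length x = D}"

type_synonym mat = "bool list \<Rightarrow> bool list \<Rightarrow> real"

definition mmult :: "nat \<Rightarrow> mat \<Rightarrow> mat \<Rightarrow> mat" where
  "mmult D M N = (\<lambda>x y. \<Sum>z\<in>cube D. M x z * N z y)"

definition msub :: "mat \<Rightarrow> mat \<Rightarrow> mat" where
  "msub M N = (\<lambda>x y. M x y - N x y)"

definition adjQ :: "nat \<Rightarrow> mat" where
  "adjQ D = (\<lambda>x y. if card {k\<in>{1..D}. x ! (k - 1) \<noteq> y ! (k - 1)} = 1 then 1 else 0)"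

definition alpha :: "nat \<Rightarrow> nat \<Rightarrow> mat" where
  "alpha D i = (\<lambda>x y. if x ! (i - 1) \<noteq> y ! (i - 1) \<and>
                          (\<forall>k\<in>{1..D} - {i}. x ! (k - 1) = y ! (k - 1)) then 1 else 0)"

definition alpha_star :: "nat \<Rightarrow> mat" where
  "alpha_star i = (\<lambda>x y. if x = y then (if \<not> x ! (i - 1) then 1 else -1) else 0)"

definition Bmat :: "nat \<Rightarrow> nat \<Rightarrow> nat \<Rightarrow> mat" where
  "Bmat D i j = msub (mmult D (mmult D (alpha_star i) (adjQ D)) (alpha_star j))
                     (mmult D (mmult D (alpha_star j) (adjQ D)) (alpha_star i))"

end

theory Submission
  imports Defs
begin

text \<open>Write \<open>s\<^sub>k(x) = \<plusminus>1\<close> for the diagonal entries of \<open>\<alpha>\<^sup>*\<^sub>k\<close>. Then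
  \<open>B\<^sub>i\<^sub>j(x,y) = A(x,y) (s\<^sub>i(x) s\<^sub>j(y) - s\<^sub>j(x) s\<^sub>i(y))\<close>, and \<open>\<alpha>\<^sub>\<ell>\<close> is the permutation matrix of the
  involution \<open>\<phi>\<close> flipping coordinate \<open>\<ell>\<close>, so \<open>(B\<alpha>\<^sub>\<ell>)(x,y) = B(x,\<phi> y)\<close> and
  \<open>(\<alpha>\<^sub>\<ell>B)(x,y) = B(\<phi> x,y)\<close>. Since \<open>A(x,\<phi> y) = A(\<phi> x,y)\<close> and \<open>\<phi>\<close> changes only the sign
  \<open>s\<^sub>\<ell>\<close>, the two brackets coincide when \<open>\<ell> \<notin> {i,j}\<close> and are opposite when \<open>\<ell> \<in> {i,j}\<close>.\<close>

definition flip_coord :: "nat \<Rightarrow> bool list \<Rightarrow> bool list" where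
  "flip_coord l x = x[l - 1 := \<not> x ! (l - 1)]"

definition coord_sign :: "nat \<Rightarrow> bool list \<Rightarrow> real" where
  "coord_sign i x = (if x ! (i - 1) then -1 else 1)"

lemma finite_cube [simp]: "finite (cube D)"
proof -
  have "cube D = {xs. set xs \<subseteq> UNIV \<and> length xs = D}"
    by (auto simp: cube_def)
  then show ?thesis
    using finite_lists_length_eq[of "UNIV :: bool set" D] by simp
qed

lemma flip_coord_in_cube: "x \<in> cube D \<Longrightarrow> flip_coord l x \<in> cube D"
  by (simp add: cube_def flip_coord_def)

lemma nth_flip_coord:
  assumes "x \<in> cube D" "1 \<le> l" "l \<le> D" "1 \<le> k" "k \<le> D"
  shows "flip_coord l x ! (k - 1) = (if k = l then \<not> x ! (k - 1) else x ! (k - 1))"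
  using assms by (auto simp: cube_def flip_coord_def nth_list_update)

lemma coord_sign_flip_coord:
  assumes "x \<in> cube D" "1 \<le> l" "l \<le> D" "1 \<le> i" "i \<le> D"
  shows "coord_sign i (flip_coord l x) = (if i = l then - coord_sign i x else coord_sign i x)"
  using nth_flip_coord[OF assms] by (simp add: coord_sign_def)

lemma alpha_eq_flip_coord:
  assumes "z \<in> cube D" "y \<in> cube D" "1 \<le> l" "l \<le> D"
  shows "alpha D l z y = (if z = flip_coord l y then 1 else 0)"
proof -
  have "(z ! (l - 1) \<noteq> y ! (l - 1) \<and> (\<forall>k\<in>{1..D} - {l}. z ! (k - 1) = y ! (k - 1)))
        \<longleftrightarrow> (\<forall>k\<in>{1..D}. z ! (k - 1) = flip_coord l y ! (k - 1))"
    using nth_flip_coord[OF assms(2-4)] assms(3,4) by auto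
  also have "\<dots> \<longleftrightarrow> z = flip_coord l y"
  proof
    assume coords: "\<forall>k\<in>{1..D}. z ! (k - 1) = flip_coord l y ! (k - 1)"
    show "z = flip_coord l y"
    proof (rule nth_equalityI)
      show "length z = length (flip_coord l y)"
        using assms by (simp add: cube_def flip_coord_def)
      fix m assume "m < length z"
      then have "Suc m \<in> {1..D}" using assms(1) by (simp add: cube_def)
      then show "z ! m = flip_coord l y ! m" using coords by fastforce
    qed
  qed simp
  finally show ?thesis by (simp add: alpha_def)
qed

lemma alpha_sym: "alpha D l z y = alpha D l y z"
  unfolding alpha_def by (simp add: eq_commute)

lemma mmult_alpha_right:
  assumes "y \<in> cube D" "1 \<le> l" "l \<le> D"
  shows "mmult D M (alpha D l) x y = M x (flip_coord l y)"
proof -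
  have "mmult D M (alpha D l) x y = (\<Sum>z\<in>cube D. if z = flip_coord l y then M x z else 0)"
    unfolding mmult_def using assms by (intro sum.cong refl) (simp add: alpha_eq_flip_coord)
  also have "\<dots> = M x (flip_coord l y)"
    using flip_coord_in_cube[OF assms(1)] by simp
  finally show ?thesis .
qed

lemma mmult_alpha_left:
  assumes "x \<in> cube D" "1 \<le> l" "l \<le> D"
  shows "mmult D (alpha D l) M x y = M (flip_coord l x) y"
proof -
  have "mmult D (alpha D l) M x y = (\<Sum>z\<in>cube D. if z = flip_coord l x then M z y else 0)"
    unfolding mmult_def using assms
    by (intro sum.cong refl) (simp add: alpha_sym[of D l x] alpha_eq_flip_coord)
  also have "\<dots> = M (flip_coord l x) y"
    using flip_coord_in_cube[OF assms(1)] by simp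
  finally show ?thesis .
qed

lemma mmult_alpha_star_left:
  assumes "x \<in> cube D"
  shows "mmult D (alpha_star i) M x y = coord_sign i x * M x y"
proof -
  have "mmult D (alpha_star i) M x y = (\<Sum>z\<in>cube D. if x = z then coord_sign i x * M z y else 0)"
    unfolding mmult_def by (rule sum.cong) (auto simp: alpha_star_def coord_sign_def)
  with assms show ?thesis by simp
qed

lemma mmult_alpha_star_right:
  assumes "y \<in> cube D"
  shows "mmult D M (alpha_star j) x y = M x y * coord_sign j y"
proof -
  have "mmult D M (alpha_star j) x y = (\<Sum>z\<in>cube D. if z = y then M x z * coord_sign j y else 0)"
    unfolding mmult_def by (rule sum.cong) (auto simp: alpha_star_def coord_sign_def)
  with assms show ?thesis by simp
qed

lemma Bmat_entry:
  assumes "x \<in> cube D" "y \<in> cube D"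
  shows "Bmat D i j x y
           = adjQ D x y * (coord_sign i x * coord_sign j y - coord_sign j x * coord_sign i y)"
  using assms
  by (simp add: Bmat_def msub_def mmult_alpha_star_left mmult_alpha_star_right algebra_simps)

lemma adjQ_flip_coord_swap:
  assumes "x \<in> cube D" "y \<in> cube D" "1 \<le> l" "l \<le> D"
  shows "adjQ D x (flip_coord l y) = adjQ D (flip_coord l x) y"
proof -
  have "{k\<in>{1..D}. x ! (k - 1) \<noteq> flip_coord l y ! (k - 1)}
        = {k\<in>{1..D}. flip_coord l x ! (k - 1) \<noteq> y ! (k - 1)}"
  proof (rule Collect_cong)
    fix k
    show "k \<in> {1..D} \<and> x ! (k - 1) \<noteq> flip_coord l y ! (k - 1)
          \<longleftrightarrow> k \<in> {1..D} \<and> flip_coord l x ! (k - 1) \<noteq> y ! (k - 1)"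
      using nth_flip_coord[OF assms(1,3,4), of k] nth_flip_coord[OF assms(2-4), of k]
      by (cases "k = l") auto
  qed
  then show ?thesis by (simp add: adjQ_def)
qed

lemma Bmat_times_alpha_entry:
  assumes "x \<in> cube D" "y \<in> cube D" "1 \<le> l" "l \<le> D"
  shows "mmult D (Bmat D i j) (alpha D l) x y
           = adjQ D (flip_coord l x) y
             * (coord_sign i x * coord_sign j (flip_coord l y)
                - coord_sign j x * coord_sign i (flip_coord l y))"
  using assms flip_coord_in_cube[OF assms(2)]
  by (simp add: mmult_alpha_right Bmat_entry adjQ_flip_coord_swap)

lemma alpha_times_Bmat_entry:
  assumes "x \<in> cube D" "y \<in> cube D" "1 \<le> l" "l \<le> D"
  shows "mmult D (alpha D l) (Bmat D i j) x y
           = adjQ D (flip_coord l x) y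
             * (coord_sign i (flip_coord l x) * coord_sign j y
                - coord_sign j (flip_coord l x) * coord_sign i y)"
  using assms flip_coord_in_cube[OF assms(1)]
  by (simp add: mmult_alpha_left Bmat_entry)

theorem lemma9p4:
  fixes D i j l :: nat
  assumes "1 \<le> D" and "1 \<le> i" and "i < j" and "j \<le> D" and "1 \<le> l" and "l \<le> D"
  shows "(l = i \<or> l = j \<longrightarrow>
            (\<forall>x\<in>cube D. \<forall>y\<in>cube D.
               mmult D (Bmat D i j) (alpha D l) x y = - mmult D (alpha D l) (Bmat D i j) x y))
       \<and> (l \<noteq> i \<and> l \<noteq> j \<longrightarrow>
            (\<forall>x\<in>cube D. \<forall>y\<in>cube D.
               mmult D (Bmat D i j) (alpha D l) x y = mmult D (alpha D l) (Bmat D i j) x y))"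
proof -
  have "1 \<le> j" "i \<le> D" using assms by auto
  with assms show ?thesis
    by (auto simp: Bmat_times_alpha_entry alpha_times_Bmat_entry coord_sign_flip_coord
        algebra_simps)
qed

end
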